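(* Let $A\in\mathbb{R}^{n\times n}$, $B=I$, $m,c_0\in\mathbb{R}^n$, $r>0$, $r_0>0$. Let $p_1,\dots,p_N$ be the generating unit vectors of a $\tfrac{\sqrt3}{2}$-SVP, with maximum alignment $\eta=\max_{i\ne j}\langle p_i,p_j\rangle$, and set $D=\max_{1\le k\le N}\|A^{k+1}-I\|_2$. Suppose \[ r_0\le\frac{r(1-\eta)}{D(3-\eta)} \] and $x_0\in\mathcal{B}(m,r)\cap\mathcal{B}(c_0,r_0)$. Let $u_0\in\mathbb{R}^n$ be arbitrary and define recursively, for $i=1,\dots,N$, \[ u_i=\big(r-\|A^{i+1}-I\|_2\,r_0\big)p_i-(A^{i+1}-I)c_0-\sum_{j=0}^{i-1}A^{i-j}u_j , \] and let $x_{k+1}=Ax_k+u_k$. Then there exists $i\in\{1,\dots,N\}$ with $x_{i+1}\in\mathcal{B}(m,r)$.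
   Context: $\|\cdot\|_2$ denotes the Euclidean norm and the induced operator norm; $\mathcal{B}(x,r)$ is the closed Euclidean ball; $\mathbb{S}^{n-1}$ the unit sphere. A $\tfrac{\sqrt3}{2}$-SVP is generated by unit vectors $p_1,\dots,p_N\in\mathbb{S}^{n-1}$ such that the open caps $C(p_i,\tfrac{\sqrt3}{2})=\{w\in\mathbb{S}^{n-1}:\langle p_i,w\rangle>\tfrac{\sqrt3}{2}\}$ cover $\mathbb{S}^{n-1}$, with $N$ the smallest integer for which such a covering exists (necessarily $N\ge2$). The corresponding spherical Voronoi partition of a sphere $\partial\mathcal{B}(c,\rho)$ has cells $R_i=\{x:\|x-c\|=\rho,\ \langle x-c,p_i\rangle\ge\langle x-c,p_j\rangle\ \forall j\ne i\}$. *)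

theory Defs
  imports "HOL-Analysis.Analysis"
begin

text \<open>Matrix power (the built-in power on vec types is componentwise, so we define it).\<close>
primrec matpow :: "real^'n^'n \<Rightarrow> nat \<Rightarrow> real^'n^'n" where
  "matpow A 0 = mat 1"
| "matpow A (Suc k) = A ** matpow A k"

definition opnorm2 :: "real^'n^'n \<Rightarrow> real" where
  "opnorm2 M = onorm (\<lambda>v. M *v v)"

definition caps_cover :: "nat \<Rightarrow> (nat \<Rightarrow> real^'n) \<Rightarrow> bool" where
  "caps_cover N p \<longleftrightarrow>
     (\<forall>i\<in>{1..N}. norm (p i) = 1) \<and>
     (\<forall>w::real^'n. norm w = 1 \<longrightarrow> (\<exists>i\<in>{1..N}. p i \<bullet> w > sqrt 3 / 2))"

definition is_SVP :: "nat \<Rightarrow> (nat \<Rightarrow> real^'n) \<Rightarrow> bool" where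
  "is_SVP N p \<longleftrightarrow> caps_cover N p \<and>
     (\<forall>M (q::nat \<Rightarrow> real^'n). caps_cover M q \<longrightarrow> N \<le> M)"

end

theory Submission
  imports Defs
begin

text \<open>
  Write \<open>v = x0 - m\<close> and \<open>s i = r - \<parallel>A^(i+1) - I\<parallel> r0\<close>. The control law cancels all earlier
  inputs, so \<open>x (i+1) - m = (v + s i p i) + (A^(i+1) - I)(x0 - c0)\<close>, where the last term has
  norm at most \<open>\<parallel>A^(i+1) - I\<parallel> r0\<close>. It therefore suffices to find a cap centre \<open>p i\<close> with
  \<open>\<parallel>v + s i p i\<parallel> \<le> s i\<close>, i.e. \<open>\<parallel>v\<parallel> \<le> 2 s i \<langle>p i, -v/\<parallel>v\<parallel>\<rangle>\<close>. The bound on \<open>r0\<close> gives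
  \<open>s i \<ge> 2r/(3 - \<eta>)\<close>. Take the cap containing \<open>-v/\<parallel>v\<parallel>\<close>: either its centre is exactly that
  direction, or the cap covering a point at angle \<open>60\<degree>\<close> from \<open>p i\<close> has a centre forcing
  \<open>\<eta> > -1/4\<close>; in both cases \<open>2 s i \<langle>p i, -v/\<parallel>v\<parallel>\<rangle> \<ge> r\<close>.
\<close>

lemma controlled_orbit_eq:
  fixes A :: "real^'n^'n" and u x :: "nat \<Rightarrow> real^'n"
  assumes step: "\<forall>k. x (Suc k) = A *v x k + u k"
  shows "x k = matpow A k *v x 0 + (\<Sum>j<k. matpow A (k - 1 - j) *v u j)"
proof (induction k)
  case 0
  then show ?case by simp
next
  case (Suc k)
  have "A *v (\<Sum>j<k. matpow A (k - 1 - j) *v u j) = (\<Sum>j<k. matpow A (Suc k - 1 - j) *v u j)"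
  proof -
    have "A *v (\<Sum>j<k. matpow A (k - 1 - j) *v u j) = (\<Sum>j<k. A *v (matpow A (k - 1 - j) *v u j))"
      by (simp add: linear_sum[OF matrix_vector_mul_linear])
    also have "\<dots> = (\<Sum>j<k. matpow A (Suc k - 1 - j) *v u j)"
    proof (rule sum.cong)
      fix j
      assume "j \<in> {..<k}"
      then have "Suc k - 1 - j = Suc (k - 1 - j)"
        by auto
      then show "A *v (matpow A (k - 1 - j) *v u j) = matpow A (Suc k - 1 - j) *v u j"
        by (simp add: matrix_vector_mul_assoc)
    qed simp
    finally show ?thesis .
  qed
  then have "x (Suc k) = matpow A (Suc k) *v x 0 + (\<Sum>j<k. matpow A (Suc k - 1 - j) *v u j) + u k"
    using step Suc.IH by (simp add: matrix_vector_right_distrib matrix_vector_mul_assoc)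
  then show ?case by simp
qed

lemma state_under_control_law:
  fixes A :: "real^'n^'n" and u x :: "nat \<Rightarrow> real^'n"
  assumes step: "\<forall>k. x (Suc k) = A *v x k + u k"
    and law: "u i = w - (matpow A (i + 1) - mat 1) *v c0 - (\<Sum>j<i. matpow A (i - j) *v u j)"
  shows "x (i + 1) = x 0 + w + (matpow A (i + 1) - mat 1) *v (x 0 - c0)"
proof -
  have "x (i + 1) = matpow A (i + 1) *v x 0 + (\<Sum>j<i. matpow A (i - j) *v u j) + u i"
    using controlled_orbit_eq[OF step, of "i + 1"] by simp
  then show ?thesis
    unfolding law by (simp add: algebra_simps)
qed

lemma opnorm2_nonneg: "0 \<le> opnorm2 M"
  unfolding opnorm2_def by (rule onorm_pos_le) simp

lemma norm_matrix_vector_mult_le_opnorm2: "norm (M *v v) \<le> opnorm2 M * norm v"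
  unfolding opnorm2_def by (rule onorm) simp

definition max_alignment :: "nat \<Rightarrow> (nat \<Rightarrow> 'a::real_inner) \<Rightarrow> real" where
  "max_alignment N p = Max {p i \<bullet> p j | i j. i \<in> {1..N} \<and> j \<in> {1..N} \<and> i \<noteq> j}"

lemma finite_alignments:
  fixes p :: "nat \<Rightarrow> 'a::real_inner" and N :: nat
  shows "finite {p i \<bullet> p j | i j. i \<in> {1..N} \<and> j \<in> {1..N} \<and> i \<noteq> j}"
proof (rule finite_subset)
  show "{p i \<bullet> p j | i j. i \<in> {1..N} \<and> j \<in> {1..N} \<and> i \<noteq> j}
      \<subseteq> (\<lambda>(i, j). p i \<bullet> p j) ` ({1..N} \<times> {1..N})"
    by auto
qed simp

lemma inner_le_max_alignment:
  assumes "i \<in> {1..N}" "j \<in> {1..N}" "i \<noteq> j"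
  shows "p i \<bullet> p j \<le> max_alignment N p"
  unfolding max_alignment_def using assms by (intro Max_ge[OF finite_alignments]) blast

lemma abs_max_alignment_le_1:
  fixes p :: "nat \<Rightarrow> 'a::real_inner"
  assumes "2 \<le> N" and unit: "\<forall>i\<in>{1..N}. norm (p i) = 1"
  shows "\<bar>max_alignment N p\<bar> \<le> 1"
proof -
  have "p 1 \<bullet> p 2 \<in> {p i \<bullet> p j | i j. i \<in> {1..N} \<and> j \<in> {1..N} \<and> i \<noteq> j}"
    using assms(1) by force
  then obtain i j where ij: "i \<in> {1..N}" "j \<in> {1..N}" "max_alignment N p = p i \<bullet> p j"
    using Max_in[OF finite_alignments] unfolding max_alignment_def by blast
  have "\<bar>p i \<bullet> p j\<bar> \<le> norm (p i) * norm (p j)"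
    by (rule Cauchy_Schwarz_ineq2)
  then show ?thesis
    using ij unit by simp
qed

lemma sqrt_3_ge: "13 / 8 \<le> sqrt (3::real)"
  by (rule real_le_rsqrt) (simp add: power2_eq_square)

lemma caps_cover_two_le:
  fixes p :: "nat \<Rightarrow> real^'n"
  assumes cov: "caps_cover N p"
  shows "2 \<le> N"
proof -
  obtain i where i: "i \<in> {1..N}"
    using cov norm_axis_1 unfolding caps_cover_def by blast
  have unit: "norm (p i) = 1"
    using cov i unfolding caps_cover_def by blast
  then have "norm (- p i) = 1"
    by simp
  then obtain j where j: "j \<in> {1..N}" "p j \<bullet> - p i > sqrt 3 / 2"
    using cov unfolding caps_cover_def by blast
  have "i \<noteq> j"
  proof
    assume "i = j"
    then have "p j \<bullet> - p i = - 1"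
      using unit by (simp add: dot_square_norm)
    moreover have "0 \<le> sqrt (3::real) / 2"
      by simp
    ultimately show False
      using j(2) by linarith
  qed
  with i j(1) show ?thesis
    by auto
qed

lemma exists_unit_orthogonal:
  fixes P u :: "'a::real_inner"
  assumes "norm P = 1" "norm u = 1" "u \<noteq> P" "u \<noteq> - P"
  shows "\<exists>q. norm q = 1 \<and> q \<bullet> P = 0"
proof -
  define q where "q = u - (P \<bullet> u) *\<^sub>R P"
  have PP: "P \<bullet> P = 1"
    using assms(1) by (simp add: dot_square_norm)
  have "q \<noteq> 0"
  proof
    assume "q = 0"
    then have u: "u = (P \<bullet> u) *\<^sub>R P"
      by (simp add: q_def)
    then have "norm u = norm ((P \<bullet> u) *\<^sub>R P)"
      by (rule arg_cong)
    then have "\<bar>P \<bullet> u\<bar> = 1"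
      using assms(1,2) by simp
    then consider "P \<bullet> u = 1" | "P \<bullet> u = - 1"
      by linarith
    then show False
      using u assms(3,4) by cases auto
  qed
  moreover have "q \<bullet> P = 0"
    unfolding q_def by (simp add: inner_diff_left PP inner_commute[of u P])
  ultimately show ?thesis
    by (intro exI[of _ "sgn q"]) (simp add: norm_sgn sgn_div_norm)
qed

lemma caps_cover_neighbour:
  fixes p :: "nat \<Rightarrow> real^'n"
  assumes cov: "caps_cover N p" and i: "i \<in> {1..N}" and q: "norm q = 1" "q \<bullet> p i = 0"
  shows "\<exists>j\<in>{1..N}. j \<noteq> i \<and> - 1/4 < p j \<bullet> p i"
proof -
  have unit: "\<forall>k\<in>{1..N}. norm (p k) = 1"
    using cov unfolding caps_cover_def by blast
  \<comment> \<open>\<open>w\<close> lies at angle \<open>60\<degree>\<close> from \<open>p i\<close>, so its cap centre is another \<open>p j\<close>, within \<open>30\<degree>\<close> of \<open>w\<close>.\<close>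
  define w where "w = (1/2) *\<^sub>R p i + (sqrt 3 / 2) *\<^sub>R q"
  have pi_pi: "p i \<bullet> p i = 1" and q_q: "q \<bullet> q = 1"
    using unit i q(1) by (simp_all add: dot_square_norm)
  have w_w: "w \<bullet> w = 1"
    unfolding w_def using pi_pi q_q q(2)
    by (simp add: inner_add_left inner_add_right inner_commute[of "p i" q])
  then have "norm w = 1"
    by (simp add: norm_eq_sqrt_inner)
  then obtain j where j: "j \<in> {1..N}" "p j \<bullet> w > sqrt 3 / 2"
    using cov unfolding caps_cover_def by blast
  have pi_w: "p i \<bullet> w = 1/2"
    unfolding w_def using pi_pi q(2) by (simp add: inner_add_right inner_commute[of "p i" q])
  have "j \<noteq> i"
  proof
    assume "j = i"
    with j(2) pi_w have "sqrt 3 < 1"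
      by simp
    with sqrt_3_ge show False
      by simp
  qed
  have "p j \<bullet> p j = 1"
    using unit j(1) by (simp add: dot_square_norm)
  then have "(norm (p j - w))\<^sup>2 = 2 - 2 * (p j \<bullet> w)"
    using w_w by (simp add: power2_norm_eq_inner inner_diff_left inner_diff_right inner_commute[of w "p j"])
  also have "\<dots> < (3/4)\<^sup>2"
    using j(2) sqrt_3_ge by (simp add: power2_eq_square)
  finally have dist_w: "norm (p j - w) < 3/4"
    by (rule power_less_imp_less_base) simp
  have "\<bar>(p j - w) \<bullet> p i\<bar> \<le> norm (p j - w)"
    using Cauchy_Schwarz_ineq2[of "p j - w" "p i"] unit i by simp
  moreover have "p j \<bullet> p i = 1/2 + (p j - w) \<bullet> p i"
    using pi_w by (simp add: inner_diff_left inner_commute[of w "p i"])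
  ultimately have "- 1/4 < p j \<bullet> p i"
    using dist_w by linarith
  with j(1) \<open>j \<noteq> i\<close> show ?thesis
    by blast
qed

lemma norm_add_scaleR_le:
  fixes p v :: "'a::real_inner"
  assumes p: "norm p = 1" and "0 \<le> s" and v: "norm v \<le> 2 * s * (p \<bullet> - sgn v)"
  shows "norm (v + s *\<^sub>R p) \<le> s"
proof -
  have "p \<bullet> v = norm v * (p \<bullet> sgn v)"
    by (cases "v = 0") (simp_all add: sgn_div_norm)
  then have "(norm (v + s *\<^sub>R p))\<^sup>2 = norm v * (norm v - 2 * s * (p \<bullet> - sgn v)) + s\<^sup>2"
    using dot_norm[of v "s *\<^sub>R p"] p \<open>0 \<le> s\<close>
    by (simp add: inner_commute[of v p] power2_eq_square algebra_simps)
  also have "\<dots> \<le> s\<^sup>2"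
    using v by (simp add: mult_nonneg_nonpos)
  finally show ?thesis
    using \<open>0 \<le> s\<close> by (rule power2_le_imp_le)
qed

lemma caps_cover_step_into_ball:
  fixes p :: "nat \<Rightarrow> real^'n" and v :: "real^'n"
  assumes cov: "caps_cover N p" and v: "norm v \<le> r"
    and s: "\<forall>i\<in>{1..N}. 2 * r / (3 - max_alignment N p) \<le> s i"
  shows "\<exists>i\<in>{1..N}. norm (v + s i *\<^sub>R p i) \<le> s i"
proof -
  define \<eta> where "\<eta> = max_alignment N p"
  have unit: "\<forall>i\<in>{1..N}. norm (p i) = 1"
    using cov unfolding caps_cover_def by blast
  have \<eta>: "\<bar>\<eta>\<bar> \<le> 1"
    unfolding \<eta>_def using abs_max_alignment_le_1[OF caps_cover_two_le[OF cov] unit] .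
  have "0 \<le> r"
    using v norm_ge_zero order_trans by blast
  have s_ge: "2 * r / b \<le> s i" if "i \<in> {1..N}" "3 - \<eta> \<le> b" for i b
  proof -
    have "2 * r / b \<le> 2 * r / (3 - \<eta>)"
      using that(2) \<eta> \<open>0 \<le> r\<close> by (intro divide_left_mono) auto
    with s that(1) show ?thesis
      unfolding \<eta>_def by fastforce
  qed
  have s_nonneg: "0 \<le> s i" if "i \<in> {1..N}" for i
    using s_ge[OF that, of 4] \<eta> \<open>0 \<le> r\<close> by (simp add: abs_le_iff)
  show ?thesis
  proof (cases "v = 0")
    case True
    obtain i where "i \<in> {1..N}"
      using caps_cover_two_le[OF cov] by force
    with True unit s_nonneg show ?thesis
      by auto
  next
    case False
    define u where "u = - sgn v"
    have "norm u = 1"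
      using False by (simp add: u_def norm_sgn)
    then obtain i where i: "i \<in> {1..N}" "p i \<bullet> u > sqrt 3 / 2"
      using cov unfolding caps_cover_def by blast
    have "r \<le> 2 * s i * (p i \<bullet> u)"
    proof (cases "u = p i")
      case True
      then have "p i \<bullet> u = 1"
        using unit i(1) by (simp add: dot_square_norm)
      with s_ge[OF i(1), of 4] \<eta> show ?thesis
        by (simp add: abs_le_iff)
    next
      case False
      have "u \<noteq> - p i"
        using i unit sqrt_3_ge by (auto simp: dot_square_norm)
      with False obtain q where "norm q = 1" "q \<bullet> p i = 0"
        using exists_unit_orthogonal[of "p i" u] unit i(1) \<open>norm u = 1\<close> by metis
      then obtain j where j: "j \<in> {1..N}" "j \<noteq> i" "- 1/4 < p j \<bullet> p i"
        using caps_cover_neighbour[OF cov i(1)] by blast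
      then have "- 1/4 < \<eta>"
        using inner_le_max_alignment[OF j(1) i(1) j(2), of p] unfolding \<eta>_def by linarith
      then have "2 * r / (13/4) \<le> s i"
        by (intro s_ge[OF i(1)]) simp
      moreover have "13/16 \<le> p i \<bullet> u"
        using i(2) sqrt_3_ge by linarith
      ultimately have "(8 * r / 13) * (13/16) \<le> s i * (p i \<bullet> u)"
        using \<open>0 \<le> r\<close> by (intro mult_mono) auto
      then show ?thesis
        by simp
    qed
    with v have "norm v \<le> 2 * s i * (p i \<bullet> - sgn v)"
      unfolding u_def by simp
    with unit i(1) s_nonneg show ?thesis
      using norm_add_scaleR_le by blast
  qed
qed

lemma shrunk_radius_ge:
  fixes r r0 D d \<eta> :: real
  assumes "0 < r0" "\<eta> \<le> 1" "0 \<le> d" "d \<le> D"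
    and r0: "r0 \<le> r * (1 - \<eta>) / (D * (3 - \<eta>))"
  shows "2 * r / (3 - \<eta>) \<le> r - d * r0"
proof -
  \<comment> \<open>For \<open>D = 0\<close> or \<open>\<eta> = 1\<close> the bound on \<open>r0\<close> divides by zero and reads \<open>r0 \<le> 0\<close>.\<close>
  have "D \<noteq> 0" "\<eta> \<noteq> 1"
    using r0 \<open>0 < r0\<close> by auto
  then have "0 < D" "0 < 3 - \<eta>"
    using assms(2-4) by auto
  then have "D * r0 \<le> r * (1 - \<eta>) / (3 - \<eta>)"
    using r0 by (simp add: field_simps)
  moreover have "d * r0 \<le> D * r0"
    using assms by (simp add: mult_right_mono)
  moreover have "r - r * (1 - \<eta>) / (3 - \<eta>) = 2 * r / (3 - \<eta>)"
    using \<open>0 < 3 - \<eta>\<close> by (simp add: field_simps)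
  ultimately show ?thesis
    by linarith
qed

theorem lemma5p2:
  fixes A :: "real^'n^'n" and m c0 x0 :: "real^'n"
    and r r0 :: real and N :: nat and p u x :: "nat \<Rightarrow> real^'n"
  assumes "r > 0" and "r0 > 0"
    and svp: "is_SVP N p"
    and eta: "\<eta> = Max {p i \<bullet> p j | i j. i \<in> {1..N} \<and> j \<in> {1..N} \<and> i \<noteq> j}"
    and D: "D = Max ((\<lambda>k. opnorm2 (matpow A (k + 1) - mat 1)) ` {1..N})"
    and r0_le: "r0 \<le> r * (1 - \<eta>) / (D * (3 - \<eta>))"
    and x0: "x0 \<in> cball m r \<inter> cball c0 r0"
    and u: "\<forall>i\<in>{1..N}. u i = (r - opnorm2 (matpow A (i + 1) - mat 1) * r0) *\<^sub>R p i
                 - (matpow A (i + 1) - mat 1) *v c0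
                 - (\<Sum>j<i. matpow A (i - j) *v u j)"
    and x_0: "x 0 = x0"
    and x_step: "\<forall>k. x (Suc k) = A *v x k + u k"
  shows "\<exists>i\<in>{1..N}. x (i + 1) \<in> cball m r"
proof -
  have cov: "caps_cover N p"
    using svp unfolding is_SVP_def by blast
  have unit: "\<forall>i\<in>{1..N}. norm (p i) = 1"
    using cov unfolding caps_cover_def by blast
  have "\<eta> = max_alignment N p"
    unfolding eta max_alignment_def ..
  then have "\<eta> \<le> 1"
    using abs_max_alignment_le_1[OF caps_cover_two_le[OF cov] unit] by simp
  define d where "d i = opnorm2 (matpow A (i + 1) - mat 1)" for i
  have "d i \<le> D" if "i \<in> {1..N}" for i
    unfolding D d_def using that by (intro Max_ge) auto
  then have radii: "\<forall>i\<in>{1..N}. 2 * r / (3 - max_alignment N p) \<le> r - d i * r0"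
    using shrunk_radius_ge[OF \<open>r0 > 0\<close> \<open>\<eta> \<le> 1\<close> opnorm2_nonneg _ r0_le] \<open>\<eta> = max_alignment N p\<close>
    unfolding d_def by blast
  have "norm (x0 - m) \<le> r" and "norm (x0 - c0) \<le> r0"
    using x0 by (simp_all add: dist_norm norm_minus_commute)
  then obtain i where i: "i \<in> {1..N}"
    and near: "norm (x0 - m + (r - d i * r0) *\<^sub>R p i) \<le> r - d i * r0"
    using caps_cover_step_into_ball[OF cov _ radii] by blast
  have offset: "x (i + 1) - m
      = (x0 - m + (r - d i * r0) *\<^sub>R p i) + (matpow A (i + 1) - mat 1) *v (x0 - c0)"
    using state_under_control_law[OF x_step] u i x_0 unfolding d_def by simp
  from \<open>norm (x0 - c0) \<le> r0\<close>
  have drift: "norm ((matpow A (i + 1) - mat 1) *v (x0 - c0)) \<le> d i * r0"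
    unfolding d_def by (meson norm_matrix_vector_mult_le_opnorm2 opnorm2_nonneg mult_left_mono order_trans)
  have "norm (x (i + 1) - m) \<le> (r - d i * r0) + d i * r0"
    unfolding offset by (rule norm_triangle_le[OF add_mono[OF near drift]])
  with i show ?thesis
    by (auto simp: dist_norm norm_minus_commute)
qed

end
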